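(* Let $R$ be an associative ring with anti-involution $a\mapsto\bar a$. Define $\tilde N:=\tilde N_e^{C_2}i_e^*(\underline R^{\mathrm{fix}})$ by $\tilde N(C_2/e)=R\otimes R^{\mathrm{op}}$ with Weyl action $a\otimes b\mapsto\bar b\otimes\bar a$, and $\tilde N(C_2/C_2)=(\mathbb Z\{R\}\oplus(R\otimes R^{\mathrm{op}})/C_2)/\mathrm{TR}$, where TR identifies $\{a+b\}\sim\{a\}+\{b\}+[a\otimes\bar b]$. With restriction $\mathrm{res}\{a\}=a\otimes\bar a$, $\mathrm{res}[a\otimes b]=a\otimes b+\bar b\otimes\bar a$, transfer $\mathrm{tr}(a\otimes b)=[a\otimes b]$, the usual ring structure on $R\otimes R^{\mathrm{op}}$ at $C_2/e$, and multiplication at $C_2/C_2$ given by \[\{a\}\{b\}=\{ab\},\quad\{a\}[b\otimes c]=[ab\otimes c\bar a],\quad[a\otimes b]\{c\}=[ac\otimes\bar cb],\quad[a\otimes b][c\otimes d]=[ac\otimes db]+[a\bar d\otimes\bar cb],\] and unit sending $1\in\underline A(C_2/C_2)=\mathbb Z[t]/(t^2-2t)$ to $\{1\}$, $t$ to $[1\otimes1]$, and $1\in\underline A(C_2/e)=\mathbb Z$ to $1\otimes1$, $\tilde N$ is a well-defined $C_2$-Mackey functor and an associative $C_2$-Green functor.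
   Context: $C_2=\{e,\tau\}$. A $C_2$-Mackey functor consists of abelian groups at $C_2/C_2$ and $C_2/e$, an involution (Weyl action) on the $C_2/e$-level, restriction $\mathrm{res}$ into the invariants and transfer $\mathrm{tr}$ with $\mathrm{tr}(\tau x)=\mathrm{tr}(x)$ and $\mathrm{res}\,\mathrm{tr}(x)=x+\tau x$. An associative $C_2$-Green functor is a monoid for the box product, i.e. associative unital rings at both levels such that $\mathrm{res}$ is a ring map, the Weyl action is by ring maps, and Frobenius reciprocity $\mathrm{tr}(x)y=\mathrm{tr}(x\,\mathrm{res}(y))$, $y\,\mathrm{tr}(x)=\mathrm{tr}(\mathrm{res}(y)x)$ holds. $\underline A$ is the $C_2$-Burnside Mackey functor, the unit for the box product. An anti-involution satisfies $\bar{\bar a}=a$, $\overline{ab}=\bar b\bar a$, $\overline{a+b}=\bar a+\bar b$. $\mathbb Z\{R\}$ is the free abelian group on symbols $\{a\}$, $a\in R$, and $[a\otimes b]$ denotes the class of $a\otimes b$ in the $C_2$-coinvariants of $R\otimes R^{\mathrm{op}}$. *)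

theory Defs
  imports Main "HOL-Library.Poly_Mapping"
begin

text \<open>Each level of the functor is presented as a quotient G/K of an abelian group G
(here: a free abelian group of formal integer combinations) by a subgroup K.
The structure maps (Weyl action, restriction, transfer, products) are given on
representatives by additive (resp. biadditive) maps.  "Well-defined" means that
they preserve the relation subgroups; all axioms are then required to hold in
the quotients, i.e. modulo the relation subgroups.\<close>

definition add_subgroup :: "'a::ab_group_add set \<Rightarrow> bool" where
  "add_subgroup K \<longleftrightarrow> 0 \<in> K \<and> (\<forall>x\<in>K. \<forall>y\<in>K. x - y \<in> K)"

definition additive :: "('a::ab_group_add \<Rightarrow> 'b::ab_group_add) \<Rightarrow> bool" where
  "additive f \<longleftrightarrow> (\<forall>x y. f (x + y) = f x + f y)"

definition biadditive :: "('a::ab_group_add \<Rightarrow> 'b::ab_group_add \<Rightarrow> 'c::ab_group_add) \<Rightarrow> bool" where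
  "biadditive m \<longleftrightarrow> (\<forall>x. additive (m x)) \<and> (\<forall>y. additive (\<lambda>x. m x y))"

definition c2_mackey_pres ::
  "'t::ab_group_add set \<Rightarrow> 'e::ab_group_add set \<Rightarrow> ('e \<Rightarrow> 'e) \<Rightarrow> ('t \<Rightarrow> 'e) \<Rightarrow> ('e \<Rightarrow> 't) \<Rightarrow> bool" where
  "c2_mackey_pres KT KE w res tr \<longleftrightarrow>
     add_subgroup KT \<and> add_subgroup KE \<and>
     additive w \<and> additive res \<and> additive tr \<and>
     \<comment> \<open>well-definedness on the quotients\<close>
     w ` KE \<subseteq> KE \<and> res ` KT \<subseteq> KE \<and> tr ` KE \<subseteq> KT \<and>
     \<comment> \<open>w is an involution\<close>
     (\<forall>x. w (w x) - x \<in> KE) \<and>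
     \<comment> \<open>restriction lands in the invariants\<close>
     (\<forall>y. w (res y) - res y \<in> KE) \<and>
     \<comment> \<open>tr (\<tau> x) = tr x\<close>
     (\<forall>x. tr (w x) - tr x \<in> KT) \<and>
     \<comment> \<open>res (tr x) = x + \<tau> x\<close>
     (\<forall>x. res (tr x) - (x + w x) \<in> KE)"

definition c2_green_pres ::
  "'t::ab_group_add set \<Rightarrow> 'e::ab_group_add set \<Rightarrow> ('e \<Rightarrow> 'e) \<Rightarrow> ('t \<Rightarrow> 'e) \<Rightarrow> ('e \<Rightarrow> 't)
   \<Rightarrow> ('t \<Rightarrow> 't \<Rightarrow> 't) \<Rightarrow> ('e \<Rightarrow> 'e \<Rightarrow> 'e) \<Rightarrow> 't \<Rightarrow> 'e \<Rightarrow> bool" where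
  "c2_green_pres KT KE w res tr mT mE uT uE \<longleftrightarrow>
     c2_mackey_pres KT KE w res tr \<and>
     biadditive mT \<and> biadditive mE \<and>
     \<comment> \<open>well-definedness of the products on the quotients\<close>
     (\<forall>x\<in>KT. \<forall>y. mT x y \<in> KT \<and> mT y x \<in> KT) \<and>
     (\<forall>x\<in>KE. \<forall>y. mE x y \<in> KE \<and> mE y x \<in> KE) \<and>
     \<comment> \<open>associative unital rings\<close>
     (\<forall>x y z. mT (mT x y) z - mT x (mT y z) \<in> KT) \<and>
     (\<forall>x. mT uT x - x \<in> KT \<and> mT x uT - x \<in> KT) \<and>
     (\<forall>x y z. mE (mE x y) z - mE x (mE y z) \<in> KE) \<and>
     (\<forall>x. mE uE x - x \<in> KE \<and> mE x uE - x \<in> KE) \<and>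
     \<comment> \<open>res is a ring map\<close>
     (\<forall>x y. res (mT x y) - mE (res x) (res y) \<in> KE) \<and> res uT - uE \<in> KE \<and>
     \<comment> \<open>the Weyl action is by ring maps\<close>
     (\<forall>x y. w (mE x y) - mE (w x) (w y) \<in> KE) \<and> w uE - uE \<in> KE \<and>
     \<comment> \<open>Frobenius reciprocity\<close>
     (\<forall>x y. mT (tr x) y - tr (mE x (res y)) \<in> KT) \<and>
     (\<forall>x y. mT y (tr x) - tr (mE (res y) x) \<in> KT)"

definition anti_involution :: "('a::ring_1 \<Rightarrow> 'a) \<Rightarrow> bool" where
  "anti_involution bar \<longleftrightarrow> (\<forall>a. bar (bar a) = a) \<and> (\<forall>a b. bar (a * b) = bar b * bar a)
     \<and> (\<forall>a b. bar (a + b) = bar a + bar b)"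

inductive_set gen_subgroup :: "'a::ab_group_add set \<Rightarrow> 'a set" for S where
  gen_zero: "0 \<in> gen_subgroup S"
| gen_base: "x \<in> S \<Longrightarrow> x \<in> gen_subgroup S"
| gen_diff: "x \<in> gen_subgroup S \<Longrightarrow> y \<in> gen_subgroup S \<Longrightarrow> x - y \<in> gen_subgroup S"

text \<open>Bottom level: R \<otimes> R^op = free abelian group on pairs (a,b) (symbol a\<otimes>b) modulo
bilinearity (tensor product over \<int>).\<close>
definition tens_rels :: "(('a::ring_1 \<times> 'a) \<Rightarrow>\<^sub>0 int) set" where
  "tens_rels = {frag_of (a + a', b) - frag_of (a, b) - frag_of (a', b) | a a' b. True}
             \<union> {frag_of (a, b + b') - frag_of (a, b) - frag_of (a, b') | a b b'. True}"

definition KE :: "(('a::ring_1 \<times> 'a) \<Rightarrow>\<^sub>0 int) set" where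
  "KE = gen_subgroup tens_rels"

text \<open>Top level generators: {a} (Br a) and [a\<otimes>b] (Sq a b).\<close>
datatype 'a topgen = Br 'a | Sq 'a 'a

text \<open>Top level: (\<int>{R} \<oplus> (R\<otimes>R^op)/C2)/TR.  Relations: bilinearity of [-\<otimes>-],
C2-coinvariance [a\<otimes>b] = [b\<bar> \<otimes> a\<bar>] (Weyl action a\<otimes>b \<mapsto> bbar\<otimes>abar), and
TR: {a+b} = {a} + {b} + [a \<otimes> bbar].\<close>
definition top_rels :: "('a::ring_1 \<Rightarrow> 'a) \<Rightarrow> ('a topgen \<Rightarrow>\<^sub>0 int) set" where
  "top_rels bar =
       {frag_of (Sq (a + a') b) - frag_of (Sq a b) - frag_of (Sq a' b) | a a' b. True}
     \<union> {frag_of (Sq a (b + b')) - frag_of (Sq a b) - frag_of (Sq a b') | a b b'. True}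
     \<union> {frag_of (Sq a b) - frag_of (Sq (bar b) (bar a)) | a b. True}
     \<union> {frag_of (Br (a + b)) - frag_of (Br a) - frag_of (Br b) - frag_of (Sq a (bar b)) | a b. True}"

definition KT :: "('a::ring_1 \<Rightarrow> 'a) \<Rightarrow> ('a topgen \<Rightarrow>\<^sub>0 int) set" where
  "KT bar = gen_subgroup (top_rels bar)"

definition weylN :: "('a::ring_1 \<Rightarrow> 'a) \<Rightarrow> (('a \<times> 'a) \<Rightarrow>\<^sub>0 int) \<Rightarrow> (('a \<times> 'a) \<Rightarrow>\<^sub>0 int)" where
  "weylN bar = frag_extend (\<lambda>(a, b). frag_of (bar b, bar a))"

definition resN :: "('a::ring_1 \<Rightarrow> 'a) \<Rightarrow> ('a topgen \<Rightarrow>\<^sub>0 int) \<Rightarrow> (('a \<times> 'a) \<Rightarrow>\<^sub>0 int)" where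
  "resN bar = frag_extend (\<lambda>g. case g of
        Br a \<Rightarrow> frag_of (a, bar a)
      | Sq a b \<Rightarrow> frag_of (a, b) + frag_of (bar b, bar a))"

definition trN :: "(('a::ring_1 \<times> 'a) \<Rightarrow>\<^sub>0 int) \<Rightarrow> ('a topgen \<Rightarrow>\<^sub>0 int)" where
  "trN = frag_extend (\<lambda>(a, b). frag_of (Sq a b))"

definition mulE :: "(('a::ring_1 \<times> 'a) \<Rightarrow>\<^sub>0 int) \<Rightarrow> (('a \<times> 'a) \<Rightarrow>\<^sub>0 int) \<Rightarrow> (('a \<times> 'a) \<Rightarrow>\<^sub>0 int)" where
  "mulE x y = frag_extend (\<lambda>(a, b). frag_extend (\<lambda>(c, d). frag_of (a * c, d * b)) y) x"

fun topgen_mul :: "('a::ring_1 \<Rightarrow> 'a) \<Rightarrow> 'a topgen \<Rightarrow> 'a topgen \<Rightarrow> ('a topgen \<Rightarrow>\<^sub>0 int)" where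
  "topgen_mul bar (Br a) (Br b) = frag_of (Br (a * b))"
| "topgen_mul bar (Br a) (Sq b c) = frag_of (Sq (a * b) (c * bar a))"
| "topgen_mul bar (Sq a b) (Br c) = frag_of (Sq (a * c) (bar c * b))"
| "topgen_mul bar (Sq a b) (Sq c d) = frag_of (Sq (a * c) (d * b)) + frag_of (Sq (a * bar d) (bar c * b))"

definition mulT :: "('a::ring_1 \<Rightarrow> 'a) \<Rightarrow> ('a topgen \<Rightarrow>\<^sub>0 int) \<Rightarrow> ('a topgen \<Rightarrow>\<^sub>0 int) \<Rightarrow> ('a topgen \<Rightarrow>\<^sub>0 int)" where
  "mulT bar x y = frag_extend (\<lambda>g. frag_extend (\<lambda>h. topgen_mul bar g h) y) x"

text \<open>Units (images of 1 under the unit map from the Burnside functor).\<close>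
definition unitT :: "('a::ring_1 topgen \<Rightarrow>\<^sub>0 int)" where "unitT = frag_of (Br 1)"
definition unitE :: "(('a::ring_1 \<times> 'a) \<Rightarrow>\<^sub>0 int)" where "unitE = frag_of (1, 1)"

end

theory Submission
  imports Defs
begin

text \<open>Both levels are free abelian groups modulo relation subgroups, and every structure map is
the (bi)additive extension of a formula on generators. Hence each axiom only has to be checked on
generators, and a (bi)additive map respects the relations as soon as it sends the generating
relations into the target subgroup. The Mackey identities and the first Frobenius identity hold
exactly on generators, the second Frobenius identity up to the coinvariance relation.
Well-definedness of the top product then rests on Frobenius reciprocity: the bilinearity and
coinvariance relations are transfers, and a product with a transfer is the transfer of a product
at the bottom level, where the relations are easily seen to form an ideal. Only a TR relation
multiplied by a generator \<open>{c}\<close> needs a direct computation, and it yields a TR relation again.\<close>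

section \<open>Additive maps on free abelian groups\<close>

lemma additive_zero: "additive f \<Longrightarrow> f 0 = 0"
  unfolding additive_def by (metis add_cancel_right_right add_0)

lemma additive_add: "additive f \<Longrightarrow> f (x + y) = f x + f y"
  by (simp add: additive_def)

lemma additive_diff: "additive f \<Longrightarrow> f (x - y) = f x - f y"
  unfolding additive_def by (metis add_diff_cancel diff_add_cancel)

lemma additive_id: "additive (\<lambda>x. x)"
  by (simp add: additive_def)

lemma additive_compose: "additive f \<Longrightarrow> additive g \<Longrightarrow> additive (\<lambda>x. f (g x))"
  by (simp add: additive_def)

lemma additive_fun_add: "additive f \<Longrightarrow> additive g \<Longrightarrow> additive (\<lambda>x. f x + g x)"
  by (simp add: additive_def algebra_simps)

lemma additive_fun_diff: "additive f \<Longrightarrow> additive g \<Longrightarrow> additive (\<lambda>x. f x - g x)"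
  by (simp add: additive_def algebra_simps)

lemma additive_frag_extend: "additive (frag_extend h)"
  by (simp add: additive_def frag_extend_add)

lemma add_subgroup_add: "add_subgroup K \<Longrightarrow> x \<in> K \<Longrightarrow> y \<in> K \<Longrightarrow> x + y \<in> K"
  unfolding add_subgroup_def by (metis diff_0 diff_minus_eq_add)

lemma add_subgroup_diff_cancel: "add_subgroup K \<Longrightarrow> x - y \<in> K \<Longrightarrow> y \<in> K \<Longrightarrow> x \<in> K"
  by (metis add_subgroup_add diff_add_cancel)

lemma add_subgroup_gen_subgroup: "add_subgroup (gen_subgroup S)"
  unfolding add_subgroup_def by (auto intro: gen_subgroup.intros)

lemma additive_image_gen_subgroup:
  assumes "additive f" "add_subgroup K" "f ` S \<subseteq> K"
  shows "f ` gen_subgroup S \<subseteq> K"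
proof
  fix y assume "y \<in> f ` gen_subgroup S"
  then obtain x where "x \<in> gen_subgroup S" "y = f x" by blast
  then show "y \<in> K"
    by (induction x arbitrary: y) (use assms in \<open>auto simp: additive_zero additive_diff add_subgroup_def\<close>)
qed

lemma additive_frag_in_subgroup:
  assumes "additive f" "add_subgroup K" "\<And>a. f (frag_of a) \<in> K"
  shows "f x \<in> K"
  using subset_UNIV
  by (induction x rule: frag_induction)
     (use assms in \<open>auto simp: additive_zero additive_diff add_subgroup_def\<close>)

lemma additive_frag_eqI:
  assumes "additive f" "additive g" "\<And>a. f (frag_of a) = g (frag_of a)"
  shows "f = g"
proof
  fix x show "f x = g x"
    using subset_UNIV
    by (induction x rule: frag_induction) (use assms in \<open>auto simp: additive_zero additive_diff\<close>)
qed

lemma additive_frag_eq: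
  "additive f \<Longrightarrow> additive g \<Longrightarrow> (\<And>a. f (frag_of a) = g (frag_of a)) \<Longrightarrow> f x = g x"
  by (metis additive_frag_eqI)

lemma biadditiveD:
  "biadditive m \<Longrightarrow> additive (m x)"
  "biadditive m \<Longrightarrow> additive (\<lambda>x. m x y)"
  by (simp_all add: biadditive_def)

lemma biadditive_frag_extend: "biadditive (\<lambda>x y. frag_extend (\<lambda>g. frag_extend (h g) y) x)"
proof -
  have "frag_extend (\<lambda>g. frag_extend (h g) (y + z)) x
      = frag_extend (\<lambda>g. frag_extend (h g) y) x + frag_extend (\<lambda>g. frag_extend (h g) z) x" for x y z
    using subset_UNIV by (induction x rule: frag_induction) (auto simp: frag_extend_add frag_extend_diff)
  then show ?thesis
    by (simp add: biadditive_def additive_def frag_extend_add)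
qed

lemma biadditive_compose:
  "additive f \<Longrightarrow> biadditive m \<Longrightarrow> biadditive (\<lambda>x y. f (m x y))"
  "biadditive m \<Longrightarrow> additive g \<Longrightarrow> additive h \<Longrightarrow> biadditive (\<lambda>x y. m (g x) (h y))"
  by (simp_all add: biadditive_def additive_def)

lemma biadditive_diff:
  "biadditive m \<Longrightarrow> biadditive m' \<Longrightarrow> biadditive (\<lambda>x y. m x y - m' x y)"
  by (simp add: biadditive_def additive_def algebra_simps)

lemma biadditive_frag_in_subgroup:
  assumes "biadditive m" "add_subgroup K" "\<And>a b. m (frag_of a) (frag_of b) \<in> K"
  shows "m x y \<in> K"
proof (rule additive_frag_in_subgroup[where f = "\<lambda>x. m x y", OF biadditiveD(2)[OF assms(1)] assms(2)])
  fix a show "m (frag_of a) y \<in> K"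
    by (rule additive_frag_in_subgroup[OF biadditiveD(1)[OF assms(1)] assms(2,3)])
qed

lemma biadditive_frag_eqI:
  assumes "biadditive m" "biadditive m'" "\<And>a b. m (frag_of a) (frag_of b) = m' (frag_of a) (frag_of b)"
  shows "m = m'"
proof (intro ext)
  fix x y
  have "m (frag_of a) = m' (frag_of a)" for a
    by (rule additive_frag_eqI[OF biadditiveD(1)[OF assms(1)] biadditiveD(1)[OF assms(2)] assms(3)])
  then have "(\<lambda>x. m x y) = (\<lambda>x. m' x y)"
    by (intro additive_frag_eqI[OF biadditiveD(2)[OF assms(1)] biadditiveD(2)[OF assms(2)]]) simp
  then show "m x y = m' x y" by metis
qed

lemma biadditive_assoc_frag:
  assumes m: "biadditive m"
    and gen: "\<And>a b c. m (m (frag_of a) (frag_of b)) (frag_of c) = m (frag_of a) (m (frag_of b) (frag_of c))"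
  shows "m (m x y) z = m x (m y z)"
proof -
  have "(\<lambda>x y. m (m x y) z) = (\<lambda>x y. m x (m y z))"
  proof (rule biadditive_frag_eqI)
    show "biadditive (\<lambda>x y. m (m x y) z)"
      using biadditive_compose(1)[OF biadditiveD(2) m] m by blast
    show "biadditive (\<lambda>x y. m x (m y z))"
      using biadditive_compose(2)[OF m additive_id biadditiveD(2)] m by blast
    fix a b
    show "m (m (frag_of a) (frag_of b)) z = m (frag_of a) (m (frag_of b) z)"
      by (rule fun_cong[OF additive_frag_eqI[OF biadditiveD(1)[OF m]
            additive_compose[OF biadditiveD(1)[OF m] biadditiveD(1)[OF m]]]])
         (rule gen)
  qed
  then show ?thesis by metis
qed

lemma biadditive_gen_subgroup_absorbs:
  assumes m: "biadditive m" and K: "add_subgroup K"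
    and rel: "\<And>r g. r \<in> S \<Longrightarrow> m r (frag_of g) \<in> K \<and> m (frag_of g) r \<in> K"
    and x: "x \<in> gen_subgroup S"
  shows "m x y \<in> K \<and> m y x \<in> K"
proof
  have "m r y \<in> K" if "r \<in> S" for r
    by (rule additive_frag_in_subgroup[OF biadditiveD(1)[OF m] K]) (use rel that in blast)
  then have "(\<lambda>x. m x y) ` gen_subgroup S \<subseteq> K"
    by (intro additive_image_gen_subgroup[OF biadditiveD(2)[OF m] K]) blast
  then show "m x y \<in> K" using x by blast
  have "m y r \<in> K" if "r \<in> S" for r
    by (rule additive_frag_in_subgroup[where f = "\<lambda>y. m y r", OF biadditiveD(2)[OF m] K])
       (use rel that in blast)
  then have "m y ` gen_subgroup S \<subseteq> K"
    by (intro additive_image_gen_subgroup[OF biadditiveD(1)[OF m] K]) blast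
  then show "m y x \<in> K" using x by blast
qed

section \<open>The generators and relations of \<open>N~\<close>\<close>

lemma add_subgroup_KE: "add_subgroup KE"
  unfolding KE_def by (rule add_subgroup_gen_subgroup)

lemma add_subgroup_KT: "add_subgroup (KT bar)"
  unfolding KT_def by (rule add_subgroup_gen_subgroup)

lemma zero_in_KT: "0 \<in> KT bar"
  unfolding KT_def by (rule gen_zero)

lemma zero_in_KE: "0 \<in> KE"
  unfolding KE_def by (rule gen_zero)

lemma additive_weylN: "additive (weylN bar)"
  unfolding weylN_def by (rule additive_frag_extend)

lemma additive_resN: "additive (resN bar)"
  unfolding resN_def by (rule additive_frag_extend)

lemma additive_trN: "additive trN"
  unfolding trN_def by (rule additive_frag_extend)

lemma biadditive_mulT: "biadditive (mulT bar)"
  unfolding mulT_def[abs_def] by (rule biadditive_frag_extend)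

lemma biadditive_mulE: "biadditive mulE"
  unfolding mulE_def[abs_def] split_def by (rule biadditive_frag_extend)

lemma weylN_frag_of [simp]: "weylN bar (frag_of (a, b)) = frag_of (bar b, bar a)"
  by (simp add: weylN_def)

lemma resN_frag_of [simp]:
  "resN bar (frag_of (Br a)) = frag_of (a, bar a)"
  "resN bar (frag_of (Sq a b)) = frag_of (a, b) + frag_of (bar b, bar a)"
  by (simp_all add: resN_def)

lemma trN_frag_of [simp]: "trN (frag_of (a, b)) = frag_of (Sq a b)"
  by (simp add: trN_def)

lemma mulE_frag_of [simp]: "mulE (frag_of (a, b)) (frag_of (c, d)) = frag_of (a * c, d * b)"
  by (simp add: mulE_def)

lemma mulT_frag_of [simp]: "mulT bar (frag_of g) (frag_of h) = topgen_mul bar g h"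
  by (simp add: mulT_def)

lemmas structure_maps_add [simp] =
  additive_add[OF additive_weylN] additive_add[OF additive_resN] additive_add[OF additive_trN]
  additive_add[OF biadditiveD(1)[OF biadditive_mulE]] additive_add[OF biadditiveD(2)[OF biadditive_mulE]]
  additive_add[OF biadditiveD(1)[OF biadditive_mulT]] additive_add[OF biadditiveD(2)[OF biadditive_mulT]]

lemmas structure_maps_diff [simp] =
  additive_diff[OF additive_weylN] additive_diff[OF additive_resN] additive_diff[OF additive_trN]
  additive_diff[OF biadditiveD(1)[OF biadditive_mulE]] additive_diff[OF biadditiveD(2)[OF biadditive_mulE]]
  additive_diff[OF biadditiveD(1)[OF biadditive_mulT]] additive_diff[OF biadditiveD(2)[OF biadditive_mulT]]

lemma tens_rels_left: "frag_of (a + a', b) - frag_of (a, b) - frag_of (a', b) \<in> tens_rels"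
  and tens_rels_right: "frag_of (a, b + b') - frag_of (a, b) - frag_of (a, b') \<in> tens_rels"
  unfolding tens_rels_def by blast+

lemma KE_frag_of_add_add:
  "frag_of (a + b, c + d) - frag_of (a, c) - frag_of (a, d) - frag_of (b, c) - frag_of (b, d) \<in> KE"
proof -
  have "frag_of (a + b, c + d) - frag_of (a, c) - frag_of (a, d) - frag_of (b, c) - frag_of (b, d)
      = (frag_of (a + b, c + d) - frag_of (a, c + d) - frag_of (b, c + d))
      + (frag_of (a, c + d) - frag_of (a, c) - frag_of (a, d))
      + (frag_of (b, c + d) - frag_of (b, c) - frag_of (b, d))"
    by (simp add: algebra_simps)
  moreover have "frag_of (a + b, c + d) - frag_of (a, c + d) - frag_of (b, c + d) \<in> KE"
    "frag_of (x, c + d) - frag_of (x, c) - frag_of (x, d) \<in> KE" for x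
    unfolding KE_def by (blast intro: gen_base tens_rels_left tens_rels_right)+
  ultimately show ?thesis
    by (metis add_subgroup_add add_subgroup_KE)
qed

lemma mulE_tens_rels:
  assumes "r \<in> tens_rels"
  shows "mulE r (frag_of g) \<in> tens_rels \<and> mulE (frag_of g) r \<in> tens_rels"
proof -
  obtain c d where g: "g = (c, d)" by (cases g)
  show ?thesis
    using assms[unfolded tens_rels_def] unfolding g
    by (elim UnE CollectE exE conjE)
       (simp_all add: distrib_left distrib_right tens_rels_left tens_rels_right)
qed

lemma mulE_KE: "x \<in> KE \<Longrightarrow> mulE x y \<in> KE \<and> mulE y x \<in> KE"
  unfolding KE_def
  by (rule biadditive_gen_subgroup_absorbs[OF biadditive_mulE add_subgroup_gen_subgroup])
     (use mulE_tens_rels in \<open>auto intro: gen_base\<close>)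

lemma mulE_assoc: "mulE (mulE x y) z = mulE x (mulE y z)"
proof (rule biadditive_assoc_frag[OF biadditive_mulE])
  fix g h k
  show "mulE (mulE (frag_of g) (frag_of h)) (frag_of k) = mulE (frag_of g) (mulE (frag_of h) (frag_of k))"
    by (cases g; cases h; cases k) (simp add: mult.assoc)
qed

lemma mulE_unitE [simp]: "mulE unitE x = x" "mulE x unitE = x"
  unfolding unitE_def
  by (rule additive_frag_eq[OF biadditiveD(1)[OF biadditive_mulE] additive_id], auto)
     (rule additive_frag_eq[OF biadditiveD(2)[OF biadditive_mulE] additive_id], auto)

definition tr_rel :: "('a::ring_1 \<Rightarrow> 'a) \<Rightarrow> 'a \<Rightarrow> 'a \<Rightarrow> 'a topgen \<Rightarrow>\<^sub>0 int" where
  "tr_rel bar a b = frag_of (Br (a + b)) - frag_of (Br a) - frag_of (Br b) - frag_of (Sq a (bar b))"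

lemma top_rels_cases:
  assumes "r \<in> top_rels bar"
  obtains (tensor) t where "t \<in> tens_rels" "r = trN t"
    | (coinvariance) a b where "r = trN (frag_of (a, b) - weylN bar (frag_of (a, b)))"
    | (TR) a b where "r = tr_rel bar a b"
  using assms unfolding top_rels_def
proof (elim UnE CollectE exE conjE)
  fix a a' b
  assume "r = frag_of (Sq (a + a') b) - frag_of (Sq a b) - frag_of (Sq a' b)"
  then show thesis
    by (intro tensor[OF tens_rels_left]) simp
next
  fix a b b'
  assume "r = frag_of (Sq a (b + b')) - frag_of (Sq a b) - frag_of (Sq a b')"
  then show thesis
    by (intro tensor[OF tens_rels_right]) simp
next
  fix a b
  assume "r = frag_of (Sq a b) - frag_of (Sq (bar b) (bar a))"
  then show thesis by (intro coinvariance[of a b]) simp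
next
  fix a b
  assume "r = frag_of (Br (a + b)) - frag_of (Br a) - frag_of (Br b) - frag_of (Sq a (bar b))"
  then show thesis by (intro TR[of a b]) (simp add: tr_rel_def)
qed

lemma trN_tens_rels_in_KT:
  assumes "t \<in> tens_rels"
  shows "trN t \<in> KT bar"
proof -
  have "trN t \<in> top_rels bar"
    using assms unfolding tens_rels_def top_rels_def by (elim UnE CollectE exE conjE) (simp, blast)+
  then show ?thesis
    unfolding KT_def by (rule gen_base)
qed

lemma trN_diff_weylN_in_KT: "trN (x - weylN bar x) \<in> KT bar"
proof (rule additive_frag_in_subgroup[where f = "\<lambda>x. trN (x - weylN bar x)"])
  show "additive (\<lambda>x. trN (x - weylN bar x))"
    by (intro additive_compose[OF additive_trN] additive_fun_diff additive_id additive_weylN)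
  fix g :: "'a \<times> 'a"
  show "trN (frag_of g - weylN bar (frag_of g)) \<in> KT bar"
    unfolding KT_def top_rels_def by (cases g) (auto intro!: gen_base)
qed (rule add_subgroup_KT)

lemma tr_rel_in_KT: "tr_rel bar a b \<in> KT bar"
  unfolding KT_def top_rels_def tr_rel_def by (auto intro!: gen_base)

section \<open>The Mackey and Green functor axioms\<close>

locale ring_with_anti_involution =
  fixes bar :: "'a::ring_1 \<Rightarrow> 'a"
  assumes anti_involution: "anti_involution bar"
begin

lemma bar_bar [simp]: "bar (bar a) = a"
  and bar_mult [simp]: "bar (a * b) = bar b * bar a"
  and bar_add [simp]: "bar (a + b) = bar a + bar b"
  using anti_involution unfolding anti_involution_def by blast+

lemma bar_one [simp]: "bar 1 = 1"
  by (metis bar_bar bar_mult mult_1)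

lemma weylN_weylN [simp]: "weylN bar (weylN bar x) = x"
  by (rule additive_frag_eq[OF additive_compose[OF additive_weylN additive_weylN] additive_id]) auto

lemma weylN_resN [simp]: "weylN bar (resN bar y) = resN bar y"
proof (rule additive_frag_eq[OF additive_compose[OF additive_weylN additive_resN] additive_resN])
  fix g show "weylN bar (resN bar (frag_of g)) = resN bar (frag_of g)"
    by (cases g) (simp_all add: add.commute)
qed

lemma resN_trN: "resN bar (trN x) = x + weylN bar x"
  by (rule additive_frag_eq[OF additive_compose[OF additive_resN additive_trN]
        additive_fun_add[OF additive_id additive_weylN]]) auto

lemma weylN_KE: "weylN bar ` KE \<subseteq> KE"
proof -
  have "weylN bar t \<in> tens_rels" if "t \<in> tens_rels" for t
    using that unfolding tens_rels_def
    by (elim UnE CollectE exE conjE) (simp, blast)+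
  then show ?thesis
    unfolding KE_def
    by (intro additive_image_gen_subgroup[OF additive_weylN add_subgroup_gen_subgroup])
       (auto intro: gen_base)
qed

lemma trN_KE: "trN ` KE \<subseteq> KT bar"
  unfolding KE_def
  by (intro additive_image_gen_subgroup[OF additive_trN add_subgroup_KT])
     (auto intro: trN_tens_rels_in_KT)

lemma resN_KT: "resN bar ` KT bar \<subseteq> KE"
proof -
  have "resN bar r \<in> KE" if "r \<in> top_rels bar" for r
    using that
  proof (cases rule: top_rels_cases)
    case (tensor t)
    then have "t \<in> KE" "weylN bar t \<in> KE"
      using weylN_KE unfolding KE_def by (auto intro: gen_base)
    then show ?thesis
      using tensor by (simp add: resN_trN add_subgroup_add add_subgroup_KE)
  next
    case coinvariance
    then show ?thesis by (simp add: resN_trN zero_in_KE)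
  next
    case (TR a b)
    show ?thesis
      using KE_frag_of_add_add[of a b "bar a" "bar b"]
      unfolding TR by (simp add: tr_rel_def algebra_simps)
  qed
  then show ?thesis
    unfolding KT_def by (intro additive_image_gen_subgroup[OF additive_resN add_subgroup_KE]) blast
qed

lemma mackey_functor_N: "c2_mackey_pres (KT bar) KE (weylN bar) (resN bar) trN"
proof -
  have "trN (weylN bar x) - trN x \<in> KT bar" for x
    using trN_diff_weylN_in_KT[where bar = bar and x = "weylN bar x"] by simp
  then show ?thesis
    unfolding c2_mackey_pres_def
    using weylN_KE resN_KT trN_KE
    by (simp add: add_subgroup_KT add_subgroup_KE additive_weylN additive_resN additive_trN
                  resN_trN zero_in_KE zero_in_KT)
qed

lemma weylN_mulE: "weylN bar (mulE x y) = mulE (weylN bar x) (weylN bar y)"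
proof -
  have "(\<lambda>x y. weylN bar (mulE x y)) = (\<lambda>x y. mulE (weylN bar x) (weylN bar y))"
    by (rule biadditive_frag_eqI[OF biadditive_compose(1)[OF additive_weylN biadditive_mulE]
          biadditive_compose(2)[OF biadditive_mulE additive_weylN additive_weylN]]) auto
  then show ?thesis by metis
qed

lemma mulT_trN_left: "mulT bar (trN x) y = trN (mulE x (resN bar y))"
proof -
  have "(\<lambda>x y. mulT bar (trN x) y) = (\<lambda>x y. trN (mulE x (resN bar y)))"
  proof (rule biadditive_frag_eqI[OF biadditive_compose(2)[OF biadditive_mulT additive_trN additive_id]
          biadditive_compose(1)[OF additive_trN biadditive_compose(2)[OF biadditive_mulE additive_id additive_resN]]])
    fix g :: "'a \<times> 'a" and h :: "'a topgen"
    show "mulT bar (trN (frag_of g)) (frag_of h) = trN (mulE (frag_of g) (resN bar (frag_of h)))"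
      by (cases g; cases h) simp_all
  qed
  then show ?thesis by metis
qed

lemma mulT_trN_right: "mulT bar y (trN x) - trN (mulE (resN bar y) x) \<in> KT bar"
proof (rule biadditive_frag_in_subgroup[where m = "\<lambda>y x. mulT bar y (trN x) - trN (mulE (resN bar y) x)"])
  show "biadditive (\<lambda>y x. mulT bar y (trN x) - trN (mulE (resN bar y) x))"
    by (intro biadditive_diff biadditive_compose(2)[OF biadditive_mulT additive_id additive_trN]
          biadditive_compose(1)[OF additive_trN biadditive_compose(2)[OF biadditive_mulE additive_resN additive_id]])
  fix g :: "'a topgen" and h :: "'a \<times> 'a"
  obtain a b where h: "h = (a, b)" by (cases h)
  show "mulT bar (frag_of g) (trN (frag_of h)) - trN (mulE (resN bar (frag_of g)) (frag_of h)) \<in> KT bar"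
  proof (cases g)
    case (Br c)
    then show ?thesis by (simp add: h zero_in_KT)
  next
    case (Sq c d)
    have "trN (frag_of (c * bar b, bar a * d) - weylN bar (frag_of (c * bar b, bar a * d))) \<in> KT bar"
      by (rule trN_diff_weylN_in_KT)
    then show ?thesis by (simp add: h Sq algebra_simps)
  qed
qed (rule add_subgroup_KT)

lemma mulT_trN_KE:
  assumes "t \<in> KE"
  shows "mulT bar (trN t) y \<in> KT bar \<and> mulT bar y (trN t) \<in> KT bar"
proof
  show "mulT bar (trN t) y \<in> KT bar"
    using trN_KE mulE_KE[OF assms] by (auto simp: mulT_trN_left)
  have "trN (mulE (resN bar y) t) \<in> KT bar"
    using trN_KE mulE_KE[OF assms] by blast
  then show "mulT bar y (trN t) \<in> KT bar"
    by (rule add_subgroup_diff_cancel[OF add_subgroup_KT mulT_trN_right])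
qed

lemma mulT_trN_coinvariance:
  "mulT bar (trN (x - weylN bar x)) y \<in> KT bar \<and> mulT bar y (trN (x - weylN bar x)) \<in> KT bar"
proof
  have "mulE (x - weylN bar x) (resN bar y)
      = mulE x (resN bar y) - weylN bar (mulE x (resN bar y))"
    by (simp add: weylN_mulE)
  then show "mulT bar (trN (x - weylN bar x)) y \<in> KT bar"
    by (simp only: mulT_trN_left trN_diff_weylN_in_KT)
  have "mulE (resN bar y) (x - weylN bar x)
      = mulE (resN bar y) x - weylN bar (mulE (resN bar y) x)"
    by (simp add: weylN_mulE)
  then have "trN (mulE (resN bar y) (x - weylN bar x)) \<in> KT bar"
    by (simp only: trN_diff_weylN_in_KT)
  then show "mulT bar y (trN (x - weylN bar x)) \<in> KT bar"
    by (rule add_subgroup_diff_cancel[OF add_subgroup_KT mulT_trN_right])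
qed

lemma mulT_resN_KE_trN:
  assumes "resN bar r \<in> KE"
  shows "mulT bar r (trN t) \<in> KT bar \<and> mulT bar (trN t) r \<in> KT bar"
proof
  have "trN (mulE (resN bar r) t) \<in> KT bar" "trN (mulE t (resN bar r)) \<in> KT bar"
    using trN_KE mulE_KE[OF assms] by blast+
  then show "mulT bar r (trN t) \<in> KT bar" "mulT bar (trN t) r \<in> KT bar"
    by (auto intro: add_subgroup_diff_cancel[OF add_subgroup_KT mulT_trN_right] simp: mulT_trN_left)
qed

lemma mulT_tr_rel_Br:
  "mulT bar (tr_rel bar a b) (frag_of (Br c)) = tr_rel bar (a * c) (b * c)"
  "mulT bar (frag_of (Br c)) (tr_rel bar a b) = tr_rel bar (c * a) (c * b)"
  by (simp_all add: tr_rel_def algebra_simps)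

lemma mulT_KT:
  assumes "x \<in> KT bar"
  shows "mulT bar x y \<in> KT bar \<and> mulT bar y x \<in> KT bar"
proof (rule biadditive_gen_subgroup_absorbs[OF biadditive_mulT add_subgroup_KT _ assms[unfolded KT_def]])
  fix r g
  assume "r \<in> top_rels bar"
  then show "mulT bar r (frag_of g) \<in> KT bar \<and> mulT bar (frag_of g) r \<in> KT bar"
  proof (cases rule: top_rels_cases)
    case (tensor t)
    then show ?thesis using mulT_trN_KE unfolding KE_def by (blast intro: gen_base)
  next
    case coinvariance
    then show ?thesis using mulT_trN_coinvariance by blast
  next
    case (TR a b)
    show ?thesis
    proof (cases g)
      case (Br c)
      then show ?thesis by (simp add: TR mulT_tr_rel_Br tr_rel_in_KT)
    next
      case (Sq c d)
      have "resN bar r \<in> KE"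
        using resN_KT tr_rel_in_KT TR by blast
      then show ?thesis
        using mulT_resN_KE_trN[where t = "frag_of (c, d)"] by (simp add: Sq)
    qed
  qed
qed

lemma mulT_assoc: "mulT bar (mulT bar x y) z = mulT bar x (mulT bar y z)"
proof (rule biadditive_assoc_frag[OF biadditive_mulT])
  fix g h k
  show "mulT bar (mulT bar (frag_of g) (frag_of h)) (frag_of k)
      = mulT bar (frag_of g) (mulT bar (frag_of h) (frag_of k))"
    by (cases g; cases h; cases k) (simp_all add: algebra_simps)
qed

lemma topgen_mul_Br_one [simp]: "topgen_mul bar (Br 1) g = frag_of g" "topgen_mul bar g (Br 1) = frag_of g"
  by (cases g; simp)+

lemma mulT_unitT [simp]: "mulT bar unitT x = x" "mulT bar x unitT = x"
  unfolding unitT_def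
  by (rule additive_frag_eq[OF biadditiveD(1)[OF biadditive_mulT] additive_id], simp)
     (rule additive_frag_eq[OF biadditiveD(2)[OF biadditive_mulT] additive_id], simp)

lemma resN_mulT: "resN bar (mulT bar x y) = mulE (resN bar x) (resN bar y)"
proof -
  have "(\<lambda>x y. resN bar (mulT bar x y)) = (\<lambda>x y. mulE (resN bar x) (resN bar y))"
  proof (rule biadditive_frag_eqI[OF biadditive_compose(1)[OF additive_resN biadditive_mulT]
          biadditive_compose(2)[OF biadditive_mulE additive_resN additive_resN]])
    fix g h
    show "resN bar (mulT bar (frag_of g) (frag_of h)) = mulE (resN bar (frag_of g)) (resN bar (frag_of h))"
      by (cases g; cases h) (simp_all add: algebra_simps)
  qed
  then show ?thesis by metis
qed

lemma green_functor_N: "c2_green_pres (KT bar) KE (weylN bar) (resN bar) trN (mulT bar) mulE unitT unitE"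
proof -
  have "\<forall>x \<in> KT bar. \<forall>y. mulT bar x y \<in> KT bar \<and> mulT bar y x \<in> KT bar"
    using mulT_KT by blast
  moreover have "\<forall>x \<in> KE. \<forall>y. mulE x y \<in> KE \<and> mulE y x \<in> (KE :: (('a \<times> 'a) \<Rightarrow>\<^sub>0 int) set)"
    using mulE_KE by blast
  moreover have "resN bar unitT = unitE" "weylN bar unitE = unitE"
    by (simp_all add: unitT_def unitE_def)
  ultimately show ?thesis
    unfolding c2_green_pres_def
    using mackey_functor_N mulT_trN_right
    by (simp add: biadditive_mulT biadditive_mulE mulT_assoc mulE_assoc resN_mulT weylN_mulE
                  mulT_trN_left zero_in_KT zero_in_KE)
qed

end

theorem mainTheorem16:
  fixes bar :: "'a::ring_1 \<Rightarrow> 'a"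
  assumes "anti_involution bar"
  shows "c2_mackey_pres (KT bar) (KE :: (('a \<times> 'a) \<Rightarrow>\<^sub>0 int) set) (weylN bar) (resN bar) trN
       \<and> c2_green_pres (KT bar) (KE :: (('a \<times> 'a) \<Rightarrow>\<^sub>0 int) set) (weylN bar) (resN bar) trN
           (mulT bar) mulE unitT unitE
       \<and> trN unitE - frag_of (Sq 1 1) \<in> KT bar
       \<and> mulT bar (frag_of (Sq 1 1)) (frag_of (Sq 1 1)) - (frag_of (Sq 1 1) + frag_of (Sq 1 1)) \<in> KT bar"
proof -
  interpret ring_with_anti_involution bar
    by (rule ring_with_anti_involution.intro) (rule assms)
  have "trN unitE - frag_of (Sq 1 1) \<in> KT bar"
    by (simp add: unitE_def zero_in_KT)
  moreover have "mulT bar (frag_of (Sq 1 1)) (frag_of (Sq 1 1)) - (frag_of (Sq 1 1) + frag_of (Sq 1 1)) \<in> KT bar"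
    by (simp add: zero_in_KT)
  ultimately show ?thesis
    using mackey_functor_N green_functor_N by blast
qed

end
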